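(* Let $\vec G=(V,\vec E)$ be a totally cyclic directed graph without loops and without parallel or antiparallel edges, whose underlying simple graph is three-edge-connected. Then there is a total order $<$ of $\vec E$ such that there is a strong map $\mathcal M^*(\vec G)\longrightarrow\mathcal M(<)$.
   Context: $\mathcal M(\vec G)$ is the oriented matroid of the directed graph on its edge set (signed circuits: cycles of the underlying graph, with edges signed $+$ or $-$ according to whether they are traversed forwards or backwards); $\mathcal M^*(\vec G)$ is its dual, whose signed circuits are the signed minimal cuts $\big(\{(u,w)\in\vec E:u\in S,w\notin S\},\{(u,w)\in\vec E:w\in S,u\notin S\}\big)$ for $S\subset V$ with $S$ and $V\setminus S$ both inducing connected subgraphs. $\vec G$ is totally cyclic if every edge lies in a directed cycle. For a finite set $E$ totally ordered by $<$, $\mathcal M(<)$ is the uniform rank 2 oriented matroid on $E$ whose signed circuits are $(\{e_1,e_3\},\{e_2\})$ and $(\{e_2\},\{e_1,e_3\})$ for $e_1<e_2<e_3$, and whose signed cocircuits are $(\{e':e'<e\},\{e'':e''>e\})$ and its opposite. A strong map $\mathcal M_1\longrightarrow\mathcal M_2$ (same ground set) exists if every cocircuit of $\mathcal M_2$ is a covector of $\mathcal M_1$, equivalently every circuit of $\mathcal M_1$ is a vector of $\mathcal M_2$. *)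

theory Defs
  imports Main
begin

text \<open>Digraph: finite vertex set V, edge set E of ordered pairs (no parallel edges by construction).\<close>

definition digraph_ok :: "'v set \<Rightarrow> ('v \<times> 'v) set \<Rightarrow> bool" where
  "digraph_ok V E \<longleftrightarrow> finite V \<and> E \<subseteq> V \<times> V
     \<and> (\<forall>u. (u, u) \<notin> E)
     \<and> (\<forall>u w. (u, w) \<in> E \<longrightarrow> (w, u) \<notin> E)"

text \<open>Every edge lies in a directed cycle: edge (u,w) closes a directed cycle iff w reaches u.\<close>
definition totally_cyclic :: "('v \<times> 'v) set \<Rightarrow> bool" where
  "totally_cyclic E \<longleftrightarrow> (\<forall>(u, w) \<in> E. (w, u) \<in> E\<^sup>*)"

definition underlying_edges :: "('v \<times> 'v) set \<Rightarrow> 'v set set" where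
  "underlying_edges E = {{u, w} | u w. (u, w) \<in> E}"

definition connected_on :: "'v set \<Rightarrow> 'v set set \<Rightarrow> bool" where
  "connected_on W F \<longleftrightarrow>
     (\<forall>u\<in>W. \<forall>w\<in>W. (u, w) \<in> {(x, y). x \<in> W \<and> y \<in> W \<and> {x, y} \<in> F}\<^sup>*)"

definition three_edge_connected :: "'v set \<Rightarrow> 'v set set \<Rightarrow> bool" where
  "three_edge_connected V F \<longleftrightarrow> (\<forall>D \<subseteq> F. card D < 3 \<longrightarrow> connected_on V (F - D))"

text \<open>Signed sets are pairs (positive part, negative part).\<close>
type_synonym 'e signed = "'e set \<times> 'e set"

definition compose :: "'e signed \<Rightarrow> 'e signed \<Rightarrow> 'e signed" where
  "compose X Y = (fst X \<union> (fst Y - snd X), snd X \<union> (snd Y - fst X))"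

text \<open>Vectors of an oriented matroid given by its signed circuits: all compositions of circuits.\<close>
inductive_set vectors_of :: "'e signed set \<Rightarrow> 'e signed set" for C where
  zero: "({}, {}) \<in> vectors_of C"
| comp: "X \<in> vectors_of C \<Longrightarrow> Y \<in> C \<Longrightarrow> compose X Y \<in> vectors_of C"

text \<open>Signed circuits of the dual M*(G): signed minimal cuts.\<close>
definition cut_circuits :: "'v set \<Rightarrow> ('v \<times> 'v) set \<Rightarrow> ('v \<times> 'v) signed set" where
  "cut_circuits V E =
     {({(u, w) \<in> E. u \<in> S \<and> w \<notin> S}, {(u, w) \<in> E. w \<in> S \<and> u \<notin> S}) | S.
        S \<subseteq> V \<and> S \<noteq> {} \<and> S \<noteq> V
        \<and> connected_on S (underlying_edges E) \<and> connected_on (V - S) (underlying_edges E)}"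

definition order_circuits :: "('e \<times> 'e) set \<Rightarrow> 'e signed set" where
  "order_circuits r =
     {({e1, e3}, {e2}) | e1 e2 e3. (e1, e2) \<in> r \<and> (e2, e3) \<in> r}
     \<union> {({e2}, {e1, e3}) | e1 e2 e3. (e1, e2) \<in> r \<and> (e2, e3) \<in> r}"

definition strong_map :: "'e signed set \<Rightarrow> 'e signed set \<Rightarrow> bool" where
  "strong_map C1 C2 \<longleftrightarrow> C1 \<subseteq> vectors_of C2"

end

theory Submission
  imports Defs Complex_Main
begin

text \<open>Order the edges by the ratio \<open>g/f\<close> of two real circulations: \<open>f\<close> strictly positive, which
  exists by total cyclicity, and \<open>g\<close> generic, i.e. with \<open>g/f\<close> injective; genericity is possible
  because, by 3-edge-connectivity, for any two edges some circulation uses the first and not the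
  second. A positive circulation crosses every cut in both directions, and subtracting a suitable
  multiple of \<open>f\<close> from \<open>g\<close> shows that the edges leaving a cut are neither all below nor all above
  the edges entering it in this order. Hence the signs of every cut alternate in both directions
  along the order, and such sign vectors are vectors of \<open>M(<)\<close>.\<close>

section \<open>Circulations\<close>

definition cut_out :: "('v \<times> 'v) set \<Rightarrow> 'v set \<Rightarrow> ('v \<times> 'v) set" where
  "cut_out E S = {(u, w) \<in> E. u \<in> S \<and> w \<notin> S}"

definition cut_in :: "('v \<times> 'v) set \<Rightarrow> 'v set \<Rightarrow> ('v \<times> 'v) set" where
  "cut_in E S = {(u, w) \<in> E. w \<in> S \<and> u \<notin> S}"

definition net_outflow :: "('v \<times> 'v) set \<Rightarrow> 'v set \<Rightarrow> ('v \<times> 'v \<Rightarrow> real) \<Rightarrow> real" where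
  "net_outflow E S h = sum h (cut_out E S) - sum h (cut_in E S)"

text \<open>Conservation is imposed across every vertex set rather than at single vertices: this is
  equivalent, and it is the form in which flows are compared with cuts.\<close>

definition unit_flow :: "('v \<times> 'v) set \<Rightarrow> 'v \<Rightarrow> 'v \<Rightarrow> ('v \<times> 'v \<Rightarrow> real) \<Rightarrow> bool" where
  "unit_flow E x y h \<longleftrightarrow> (\<forall>S. net_outflow E S h = of_bool (x \<in> S) - of_bool (y \<in> S))"

definition circulation :: "('v \<times> 'v) set \<Rightarrow> ('v \<times> 'v \<Rightarrow> real) \<Rightarrow> bool" where
  "circulation E h \<longleftrightarrow> (\<forall>S. net_outflow E S h = 0)"

lemma cut_out_Compl [simp]: "cut_out E (- S) = cut_in E S"
  and cut_in_Compl [simp]: "cut_in E (- S) = cut_out E S"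
  by (auto simp: cut_out_def cut_in_def)

lemma finite_cut_out: "finite E \<Longrightarrow> finite (cut_out E S)"
  and finite_cut_in: "finite E \<Longrightarrow> finite (cut_in E S)"
  unfolding cut_out_def cut_in_def by (auto elim: rev_finite_subset)

lemma net_outflow_zero: "net_outflow E S (\<lambda>_. 0) = 0"
  by (simp add: net_outflow_def)

lemma net_outflow_add: "net_outflow E S (\<lambda>e. g e + h e) = net_outflow E S g + net_outflow E S h"
  by (simp add: net_outflow_def sum.distrib)

lemma net_outflow_scale: "net_outflow E S (\<lambda>e. c * h e) = c * net_outflow E S h"
  by (simp add: net_outflow_def sum_distrib_left right_diff_distrib)

lemma net_outflow_sum:
  "net_outflow E S (\<lambda>e. \<Sum>i\<in>I. h i e) = (\<Sum>i\<in>I. net_outflow E S (h i))"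
  by (simp add: net_outflow_def sum.swap[of _ I] sum_subtractf)

lemma circulation_iff_unit_flow_loop: "circulation E h \<longleftrightarrow> unit_flow E x x h"
  by (simp add: circulation_def unit_flow_def)

lemma circulation_balance:
  "circulation E h \<Longrightarrow> sum h (cut_out E S) = sum h (cut_in E S)"
  by (simp add: circulation_def net_outflow_def)

lemma circulation_add: "circulation E g \<Longrightarrow> circulation E h \<Longrightarrow> circulation E (\<lambda>e. g e + h e)"
  by (simp add: circulation_def net_outflow_add)

lemma circulation_scale: "circulation E h \<Longrightarrow> circulation E (\<lambda>e. c * h e)"
  by (simp add: circulation_def net_outflow_scale)

lemma circulation_sum:
  "(\<And>i. i \<in> I \<Longrightarrow> circulation E (h i)) \<Longrightarrow> circulation E (\<lambda>e. \<Sum>i\<in>I. h i e)"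
  by (simp add: circulation_def net_outflow_sum)

lemma unit_flow_refl: "unit_flow E x x (\<lambda>_. 0)"
  by (simp add: unit_flow_def net_outflow_zero)

lemma unit_flow_edge:
  assumes "finite E" and "(x, y) \<in> E"
  shows "unit_flow E x y (\<lambda>e. if e = (x, y) then 1 else 0)"
  unfolding unit_flow_def net_outflow_def
proof
  fix S
  have "(x, y) \<in> cut_out E S \<longleftrightarrow> x \<in> S \<and> y \<notin> S" "(x, y) \<in> cut_in E S \<longleftrightarrow> y \<in> S \<and> x \<notin> S"
    using assms(2) by (auto simp: cut_out_def cut_in_def)
  with assms(1) show "(\<Sum>e\<in>cut_out E S. if e = (x, y) then 1 else 0)
      - (\<Sum>e\<in>cut_in E S. if e = (x, y) then 1 else 0) = (of_bool (x \<in> S) - of_bool (y \<in> S) :: real)"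
    by (cases "x \<in> S"; cases "y \<in> S") (simp_all add: finite_cut_out finite_cut_in)
qed

lemma unit_flow_trans:
  "unit_flow E x y g \<Longrightarrow> unit_flow E y z h \<Longrightarrow> unit_flow E x z (\<lambda>e. g e + h e)"
  by (simp add: unit_flow_def net_outflow_add)

lemma unit_flow_reverse: "unit_flow E x y h \<Longrightarrow> unit_flow E y x (\<lambda>e. - h e)"
  using net_outflow_scale[of E _ "-1" h] by (simp add: unit_flow_def)

lemma unit_flow_along_path:
  assumes "finite E" and "(x, y) \<in> E\<^sup>*"
  shows "\<exists>h. unit_flow E x y h \<and> (\<forall>e. h e \<ge> 0)"
  using assms(2)
proof (induction rule: rtrancl_induct)
  case base
  show ?case by (intro exI[of _ "\<lambda>_. 0"]) (simp add: unit_flow_refl)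
next
  case (step y z)
  then obtain h where h: "unit_flow E x y h" "\<forall>e. h e \<ge> 0"
    by blast
  have "unit_flow E x z (\<lambda>e. h e + (if e = (y, z) then 1 else 0))"
    using unit_flow_trans[OF h(1) unit_flow_edge[OF assms(1) step(2)]] .
  moreover have "\<forall>e. h e + (if e = (y, z) then 1 else 0) \<ge> 0"
    using h(2) by simp
  ultimately show ?case
    by blast
qed

lemma unit_flow_along_undirected_path:
  assumes "finite E" and "F \<subseteq> underlying_edges E" and "(x, y) \<in> {(u, w). {u, w} \<in> F}\<^sup>*"
  shows "\<exists>h. unit_flow E x y h \<and> (\<forall>(u, w) \<in> E. {u, w} \<notin> F \<longrightarrow> h (u, w) = 0)"
  using assms(3)
proof (induction rule: rtrancl_induct)
  case base
  show ?case by (intro exI[of _ "\<lambda>_. 0"]) (simp add: unit_flow_refl)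
next
  case (step y z)
  then obtain h where h: "unit_flow E x y h" "\<forall>(u, w) \<in> E. {u, w} \<notin> F \<longrightarrow> h (u, w) = 0"
    by blast
  have "{y, z} \<in> F"
    using step(2) by simp
  then have "(y, z) \<in> E \<or> (z, y) \<in> E"
    using assms(2) by (auto simp: underlying_edges_def doubleton_eq_iff)
  then show ?case
  proof
    assume "(y, z) \<in> E"
    with unit_flow_trans[OF h(1) unit_flow_edge[OF assms(1)]] h(2) \<open>{y, z} \<in> F\<close>
    show ?case
      by (intro exI[of _ "\<lambda>e. h e + (if e = (y, z) then 1 else 0)"]) auto
  next
    assume "(z, y) \<in> E"
    with unit_flow_trans[OF h(1) unit_flow_reverse[OF unit_flow_edge[OF assms(1)]]] h(2)
      \<open>{y, z} \<in> F\<close>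
    show ?case
      by (intro exI[of _ "\<lambda>e. h e + - (if e = (z, y) then 1 else 0)"]) (auto simp: insert_commute)
  qed
qed

lemma totally_cyclic_positive_circulation:
  assumes "finite E" and "totally_cyclic E"
  obtains f where "circulation E f" and "\<forall>e\<in>E. f e > 0"
proof -
  have "\<exists>c. circulation E c \<and> (\<forall>x. c x \<ge> 0) \<and> c e \<ge> 1" if "e \<in> E" for e
  proof -
    obtain u w where e: "e = (u, w)"
      by fastforce
    have "(w, u) \<in> E\<^sup>*"
      using assms(2) that by (auto simp: totally_cyclic_def e)
    then obtain p where p: "unit_flow E w u p" "\<forall>x. p x \<ge> 0"
      using unit_flow_along_path[OF assms(1)] by blast
    have "circulation E (\<lambda>x. (if x = (u, w) then 1 else 0) + p x)"
      using unit_flow_trans[OF unit_flow_edge[OF assms(1)] p(1)] that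
      by (simp add: circulation_iff_unit_flow_loop[where x = u] e)
    with p(2) show ?thesis
      by (intro exI[of _ "\<lambda>x. (if x = (u, w) then 1 else 0) + p x"]) (auto simp: e)
  qed
  then obtain C where C: "\<And>e. e \<in> E \<Longrightarrow> circulation E (C e) \<and> (\<forall>x. C e x \<ge> 0) \<and> C e e \<ge> 1"
    by metis
  have "circulation E (\<lambda>x. \<Sum>e\<in>E. C e x)"
    using C by (intro circulation_sum) blast
  moreover have "(\<Sum>e\<in>E. C e x) > 0" if "x \<in> E" for x
  proof -
    have "C x x \<le> (\<Sum>e\<in>E. C e x)"
      by (rule member_le_sum) (use C assms(1) that in blast)+
    with C[OF that] show ?thesis
      by linarith
  qed
  ultimately show thesis
    using that by blast
qed

lemma three_edge_connected_separating_circulation: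
  assumes "finite E" and "E \<subseteq> V \<times> V" and "three_edge_connected V (underlying_edges E)"
    and "a \<in> E" and "b \<in> E" and "a \<noteq> b"
  obtains h where "circulation E h" and "h a = 1" and "h b = 0"
proof -
  obtain u w u' w' where a: "a = (u, w)" and b: "b = (u', w')"
    by fastforce
  define D where "D = {{u, w}, {u', w'}}"
  have D: "D \<subseteq> underlying_edges E"
    using assms(4,5) by (auto simp: D_def underlying_edges_def a b)
  moreover have "card D < 3"
    by (cases "{u, w} = {u', w'}") (auto simp: D_def)
  ultimately have "connected_on V (underlying_edges E - D)"
    using assms(3) by (simp add: three_edge_connected_def)
  moreover have "u \<in> V" "w \<in> V"
    using assms(2,4) by (auto simp: a)
  ultimately have "(w, u) \<in> {(x, y). x \<in> V \<and> y \<in> V \<and> {x, y} \<in> underlying_edges E - D}\<^sup>*"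
    unfolding connected_on_def by blast
  then have "(w, u) \<in> {(x, y). {x, y} \<in> underlying_edges E - D}\<^sup>*"
    by (rule rtrancl_mono[THEN subsetD, rotated]) auto
  then obtain p where p: "unit_flow E w u p"
    and p0: "\<forall>(x, y) \<in> E. {x, y} \<notin> underlying_edges E - D \<longrightarrow> p (x, y) = 0"
    using unit_flow_along_undirected_path[OF assms(1)] by blast
  have "circulation E (\<lambda>e. (if e = a then 1 else 0) + p e)"
    using unit_flow_trans[OF unit_flow_edge[OF assms(1)] p] assms(4)
    by (simp add: circulation_iff_unit_flow_loop[where x = u] a)
  moreover have "p a = 0" "p b = 0"
    using p0 assms(4,5) by (auto simp: D_def a b)
  ultimately show thesis
    using that[of "\<lambda>e. (if e = a then 1 else 0) + p e"] assms(6) by simp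
qed

text \<open>Induction on the kernels: to a point outside the earlier kernels add a multiple of a point
  outside the new one, avoiding the finitely many bad coefficients.\<close>

lemma exists_avoiding_kernels:
  fixes L :: "'q \<Rightarrow> ('e \<Rightarrow> real) \<Rightarrow> real"
  assumes "finite Q" and "P (\<lambda>_. 0)"
    and closed: "\<And>g h c. P g \<Longrightarrow> P h \<Longrightarrow> P (\<lambda>e. g e + c * h e)"
    and linear: "\<And>q g h c. L q (\<lambda>e. g e + c * h e) = L q g + c * L q h"
    and nonzero: "\<And>q. q \<in> Q \<Longrightarrow> \<exists>h. P h \<and> L q h \<noteq> 0"
  shows "\<exists>g. P g \<and> (\<forall>q\<in>Q. L q g \<noteq> 0)"
  using assms(1) nonzero
proof (induction Q rule: finite_induct)
  case empty
  show ?case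
    using \<open>P (\<lambda>_. 0)\<close> by blast
next
  case (insert q Q)
  obtain g where g: "P g" "\<forall>q'\<in>Q. L q' g \<noteq> 0"
    using insert.IH insert.prems by blast
  obtain h where h: "P h" "L q h \<noteq> 0"
    using insert.prems by blast
  have "finite ((\<lambda>q'. - L q' g / L q' h) ` insert q Q)"
    using insert.hyps by simp
  then obtain c :: real where c: "c \<notin> (\<lambda>q'. - L q' g / L q' h) ` insert q Q"
    using ex_new_if_finite infinite_UNIV_char_0 by blast
  have "L q' (\<lambda>e. g e + c * h e) \<noteq> 0" if "q' \<in> insert q Q" for q'
  proof (cases "L q' h = 0")
    case True
    then show ?thesis
      using that g(2) h(2) by (auto simp: linear)
  next
    case False
    show ?thesis
    proof
      assume "L q' (\<lambda>e. g e + c * h e) = 0"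
      then have "c = - L q' g / L q' h"
        using False by (simp add: linear field_simps)
      with c that show False
        by blast
    qed
  qed
  with closed g(1) h(1) show ?case
    by blast
qed

lemma exists_generic_circulation:
  assumes "finite E" and "E \<subseteq> V \<times> V" and "three_edge_connected V (underlying_edges E)"
    and f: "\<forall>e\<in>E. f e > 0"
  obtains g where "circulation E g" and "inj_on (\<lambda>e. g e / f e) E"
proof -
  define L where "L = (\<lambda>(a, b) g. g a * f b - g b * f a)"
  have "\<exists>g. circulation E g \<and> (\<forall>q\<in>{(a, b) \<in> E \<times> E. a \<noteq> b}. L q g \<noteq> 0)"
  proof (rule exists_avoiding_kernels)
    show "finite {(a, b) \<in> E \<times> E. a \<noteq> b}"
      by (rule finite_subset[of _ "E \<times> E"]) (use assms(1) in auto)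
    show "circulation E (\<lambda>_. 0)"
      by (simp add: circulation_def net_outflow_zero)
    show "circulation E (\<lambda>e. g e + c * h e)" if "circulation E g" "circulation E h" for g h c
      using that by (intro circulation_add circulation_scale)
    show "L q (\<lambda>e. g e + c * h e) = L q g + c * L q h" for q g h c
      by (cases q) (simp add: L_def algebra_simps)
    show "\<exists>h. circulation E h \<and> L q h \<noteq> 0" if "q \<in> {(a, b) \<in> E \<times> E. a \<noteq> b}" for q
    proof -
      obtain a b where q: "q = (a, b)"
        by (cases q)
      with that have "a \<in> E" "b \<in> E" "a \<noteq> b"
        by simp_all
      then obtain h where "circulation E h" "h a = 1" "h b = 0"
        using three_edge_connected_separating_circulation[OF assms(1-3)] by metis
      with f q \<open>b \<in> E\<close> show ?thesis
        by (intro exI[of _ h]) (auto simp: L_def)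
    qed
  qed
  then obtain g where g: "circulation E g" and gL: "\<forall>q\<in>{(a, b) \<in> E \<times> E. a \<noteq> b}. L q g \<noteq> 0"
    by blast
  have "inj_on (\<lambda>e. g e / f e) E"
  proof (rule inj_onI, rule ccontr)
    fix a b assume "a \<in> E" "b \<in> E" "g a / f a = g b / f b" "a \<noteq> b"
    moreover from this have "L (a, b) g \<noteq> 0"
      using gL by blast
    moreover have "f a \<noteq> 0" "f b \<noteq> 0"
      using f \<open>a \<in> E\<close> \<open>b \<in> E\<close> by (metis less_irrefl)+
    ultimately show False
      by (simp add: L_def frac_eq_eq)
  qed
  with g(1) that show thesis
    by blast
qed

lemma rtrancl_leaves_set:
  assumes "(u, w) \<in> R\<^sup>*" and "u \<in> S" and "w \<notin> S"
  obtains x y where "(x, y) \<in> R" and "x \<in> S" and "y \<notin> S"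
  using assms by (induction rule: rtrancl_induct) blast+

lemma connected_on_cut_nonempty:
  assumes "connected_on V (underlying_edges E)" and "S \<subseteq> V" and "S \<noteq> {}" and "S \<noteq> V"
  shows "cut_out E S \<union> cut_in E S \<noteq> {}"
proof -
  obtain u w where "u \<in> S" "w \<in> V" "w \<notin> S"
    using assms(2-4) by blast
  with assms(1,2) have "(u, w) \<in> {(x, y). x \<in> V \<and> y \<in> V \<and> {x, y} \<in> underlying_edges E}\<^sup>*"
    unfolding connected_on_def by blast
  then obtain x y where "{x, y} \<in> underlying_edges E" "x \<in> S" "y \<notin> S"
    using \<open>u \<in> S\<close> \<open>w \<notin> S\<close> by (auto elim: rtrancl_leaves_set)
  then show ?thesis
    by (auto simp: underlying_edges_def doubleton_eq_iff cut_out_def cut_in_def)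
qed

lemma positive_circulation_crosses_both_ways:
  assumes "finite E" and "circulation E f" and "\<forall>e\<in>E. f e > 0"
    and "cut_out E S \<union> cut_in E S \<noteq> {}"
  shows "cut_out E S \<noteq> {}" and "cut_in E S \<noteq> {}"
proof -
  have pos: "sum f A > 0" if "A \<subseteq> E" "A \<noteq> {}" for A
    using finite_subset[OF that(1) assms(1)] that assms(3) by (intro sum_pos) auto
  have sub: "cut_out E S \<subseteq> E" "cut_in E S \<subseteq> E"
    by (auto simp: cut_out_def cut_in_def)
  have "sum f (cut_out E S) = sum f (cut_in E S)"
    using assms(2) by (rule circulation_balance)
  with assms(4) pos[OF sub(1)] pos[OF sub(2)] show "cut_out E S \<noteq> {}" "cut_in E S \<noteq> {}"
    by fastforce+
qed

text \<open>If every edge leaving \<open>S\<close> had a smaller ratio \<open>g/f\<close> than every edge entering \<open>S\<close>, then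
  subtracting \<open>\<tau> f\<close>, with \<open>\<tau>\<close> the largest outgoing ratio, would give a circulation that is
  nonpositive on the edges leaving \<open>S\<close> and positive on the edges entering it.\<close>

lemma circulation_ratio_inversion:
  assumes "finite E" and "circulation E f" and f: "\<forall>e\<in>E. f e > 0" and "circulation E g"
    and "cut_out E S \<noteq> {}" and "cut_in E S \<noteq> {}"
  shows "\<exists>a\<in>cut_out E S. \<exists>b\<in>cut_in E S. g b / f b \<le> g a / f a"
proof (rule ccontr)
  assume "\<not> ?thesis"
  then have above: "\<And>a b. a \<in> cut_out E S \<Longrightarrow> b \<in> cut_in E S \<Longrightarrow> g a / f a < g b / f b"
    by force
  have sub: "cut_out E S \<subseteq> E" "cut_in E S \<subseteq> E"
    by (auto simp: cut_out_def cut_in_def)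
  define \<tau> where "\<tau> = Max ((\<lambda>e. g e / f e) ` cut_out E S)"
  have fin: "finite (cut_out E S)" "finite (cut_in E S)"
    using assms(1) by (simp_all add: finite_cut_out finite_cut_in)
  have "\<tau> \<in> (\<lambda>e. g e / f e) ` cut_out E S"
    unfolding \<tau>_def using fin assms(5) by (intro Max_in) auto
  then obtain a where a: "a \<in> cut_out E S" "g a / f a = \<tau>"
    by blast
  define h where "h = (\<lambda>e. g e + (- \<tau>) * f e)"
  have "circulation E h"
    unfolding h_def using assms(2,4) by (intro circulation_add circulation_scale)
  then have balance: "sum h (cut_out E S) = sum h (cut_in E S)"
    by (rule circulation_balance)
  have "h e \<le> 0" if "e \<in> cut_out E S" for e
  proof -
    have "g e / f e \<le> \<tau>"
      unfolding \<tau>_def using fin that by (intro Max_ge) auto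
    with f sub that show ?thesis
      by (auto simp: h_def pos_divide_le_eq)
  qed
  then have "sum h (cut_out E S) \<le> 0"
    by (rule sum_nonpos)
  moreover have "h e > 0" if "e \<in> cut_in E S" for e
    using above[OF a(1) that] a(2) f sub that by (auto simp: h_def pos_less_divide_eq)
  then have "sum h (cut_in E S) > 0"
    using fin assms(6) by (intro sum_pos) auto
  ultimately show False
    using balance by linarith
qed

section \<open>The rank 2 uniform oriented matroid of a total order\<close>

lemma vectors_of_circuit: "X \<in> C \<Longrightarrow> X \<in> vectors_of C"
  using vectors_of.comp[OF vectors_of.zero] by (simp add: compose_def)

lemma order_circuits_swap: "(P, N) \<in> order_circuits r \<Longrightarrow> (N, P) \<in> order_circuits r"
  unfolding order_circuits_def by blast

lemma strict_linear_order_on_sort3: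
  assumes "strict_linear_order_on E r" and "d \<in> E" "x \<in> E" "y \<in> E"
    and "d \<noteq> x" "d \<noteq> y" "x \<noteq> y"
  obtains e1 e2 e3 where "{e1, e2, e3} = {d, x, y}" and "(e1, e2) \<in> r" and "(e2, e3) \<in> r"
  using assms unfolding strict_linear_order_on_def total_on_def
  by (smt (verit) insert_commute)

lemma order_circuit_through:
  assumes "strict_linear_order_on E r" and "d \<in> E" "x \<in> E" "y \<in> E"
    and "d \<noteq> x" "d \<noteq> y" "x \<noteq> y"
  obtains P N where "(P, N) \<in> order_circuits r" and "P \<union> N \<subseteq> {d, x, y}" and "d \<in> P" and "d \<notin> N"
proof -
  obtain e1 e2 e3 where e: "{e1, e2, e3} = {d, x, y}" "(e1, e2) \<in> r" "(e2, e3) \<in> r"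
    using strict_linear_order_on_sort3[OF assms] by blast
  have "e1 \<noteq> e2" "e2 \<noteq> e3" "e1 \<noteq> e3"
    using e(2,3) assms(1) by (auto simp: strict_linear_order_on_def irrefl_def dest: transD)
  moreover have "({e1, e3}, {e2}) \<in> order_circuits r" "({e2}, {e1, e3}) \<in> order_circuits r"
    using e(2,3) unfolding order_circuits_def by blast+
  moreover have "d \<in> {e1, e2, e3}" "{e1, e2, e3} \<subseteq> {d, x, y}"
    using e(1) by simp_all
  ultimately show thesis
    using that[of "{e2}" "{e1, e3}"] that[of "{e1, e3}" "{e2}"] by (cases "d = e2") auto
qed

lemma order_vector_insert:
  assumes slo: "strict_linear_order_on E r" and X: "(P, N) \<in> vectors_of (order_circuits r)"
    and xy: "x \<in> P \<union> N" "y \<in> P \<union> N" "x \<noteq> y" "x \<in> E" "y \<in> E"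
    and d: "d \<in> E" "d \<notin> P \<union> N"
  shows "(insert d P, N) \<in> vectors_of (order_circuits r)"
    and "(P, insert d N) \<in> vectors_of (order_circuits r)"
proof -
  have "d \<noteq> x" "d \<noteq> y"
    using xy d by auto
  then obtain P' N' where Y: "(P', N') \<in> order_circuits r" "P' \<union> N' \<subseteq> {d, x, y}" "d \<in> P'" "d \<notin> N'"
    using order_circuit_through[OF slo d(1) xy(4,5) _ _ xy(3)] by blast
  have "compose (P, N) (P', N') = (insert d P, N)" "compose (P, N) (N', P') = (P, insert d N)"
    using Y xy d by (auto simp: compose_def)
  then show "(insert d P, N) \<in> vectors_of (order_circuits r)"
    and "(P, insert d N) \<in> vectors_of (order_circuits r)"
    using vectors_of.comp[OF X Y(1)] vectors_of.comp[OF X order_circuits_swap[OF Y(1)]] by simp_all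
qed

lemma order_vector_extend:
  assumes slo: "strict_linear_order_on E r" and X: "(P0, N0) \<in> vectors_of (order_circuits r)"
    and xy: "x \<in> P0 \<union> N0" "y \<in> P0 \<union> N0" "x \<noteq> y"
    and PN: "P \<union> N \<subseteq> E" "finite (P \<union> N)" "P \<inter> N = {}" "P0 \<subseteq> P" "N0 \<subseteq> N"
  shows "(P, N) \<in> vectors_of (order_circuits r)"
proof -
  have "(P0 \<union> (A \<inter> P), N0 \<union> (A \<inter> N)) \<in> vectors_of (order_circuits r)"
    if "finite A" "A \<subseteq> P \<union> N" for A
    using that
  proof (induction A rule: finite_induct)
    case empty
    show ?case
      using X by simp
  next
    case (insert d A)
    let ?P = "P0 \<union> (A \<inter> P)" and ?N = "N0 \<union> (A \<inter> N)"
    have IH: "(?P, ?N) \<in> vectors_of (order_circuits r)"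
      using insert by simp
    show ?case
    proof (cases "d \<in> ?P \<union> ?N")
      case True
      then have "P0 \<union> (insert d A \<inter> P) = ?P" "N0 \<union> (insert d A \<inter> N) = ?N"
        using PN(3-5) by auto
      with IH show ?thesis
        by simp
    next
      case False
      have "x \<in> ?P \<union> ?N" "y \<in> ?P \<union> ?N" "x \<in> E" "y \<in> E" "d \<in> E"
        using xy PN insert.prems by auto
      note insert_d = order_vector_insert[OF slo IH this(1,2) xy(3) this(3-5) False]
      consider "d \<in> P" "d \<notin> N" | "d \<in> N" "d \<notin> P"
        using insert.prems PN(3) by auto
      then show ?thesis
      proof cases
        case 1
        then show ?thesis
          using insert_d(1) by (simp add: Un_insert_right)
      next
        case 2
        then show ?thesis
          using insert_d(2) by (simp add: Un_insert_right)
      qed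
    qed
  qed
  moreover have "P0 \<union> ((P \<union> N) \<inter> P) = P" "N0 \<union> ((P \<union> N) \<inter> N) = N"
    using PN(4,5) by auto
  ultimately show ?thesis
    using PN(2) by (metis order_refl)
qed

text \<open>A circuit on three of the given elements is conformal to \<open>(P, N)\<close>; the remaining elements
  are then added one at a time.\<close>

lemma order_vector_of_alternating:
  assumes slo: "strict_linear_order_on E r"
    and PN: "P \<union> N \<subseteq> E" "finite (P \<union> N)" "P \<inter> N = {}"
    and "a \<in> P" "b \<in> N" "(b, a) \<in> r" and "a' \<in> P" "b' \<in> N" "(a', b') \<in> r"
  shows "(P, N) \<in> vectors_of (order_circuits r)"
proof -
  have "a \<noteq> b'" "a \<in> E" "b' \<in> E"
    using assms by auto
  then consider "(a, b') \<in> r" | "(b', a) \<in> r"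
    using slo by (auto simp: strict_linear_order_on_def total_on_def)
  then show ?thesis
  proof cases
    case 1
    with \<open>(b, a) \<in> r\<close> have "({a}, {b, b'}) \<in> order_circuits r"
      unfolding order_circuits_def by blast
    then show ?thesis
      by (rule order_vector_extend[OF slo vectors_of_circuit, where x = a and y = b])
        (use assms in auto)
  next
    case 2
    with \<open>(a', b') \<in> r\<close> have "({a', a}, {b'}) \<in> order_circuits r"
      unfolding order_circuits_def by blast
    then show ?thesis
      by (rule order_vector_extend[OF slo vectors_of_circuit, where x = a' and y = b'])
        (use assms in auto)
  qed
qed

lemma strict_linear_order_on_inj_key:
  fixes t :: "'a \<Rightarrow> 'b::linorder"
  assumes "inj_on t E"
  shows "strict_linear_order_on E {(a, b). a \<in> E \<and> b \<in> E \<and> t a < t b}"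
  using assms unfolding strict_linear_order_on_def trans_def irrefl_def total_on_def inj_on_def
  by (auto simp: not_less order_le_less)

lemma cut_mem_vectors_of_ratio_order:
  assumes "finite E" and "circulation E f" and "\<forall>e\<in>E. f e > 0" and "circulation E g"
    and inj: "inj_on (\<lambda>e. g e / f e) E" and "cut_out E S \<union> cut_in E S \<noteq> {}"
  shows "(cut_out E S, cut_in E S)
           \<in> vectors_of (order_circuits {(a, b). a \<in> E \<and> b \<in> E \<and> g a / f a < g b / f b})"
proof -
  have ne: "cut_out E S \<noteq> {}" "cut_in E S \<noteq> {}"
    using positive_circulation_crosses_both_ways[OF assms(1-3,6)] by blast+
  have sub: "cut_out E S \<subseteq> E" "cut_in E S \<subseteq> E" and disj: "cut_out E S \<inter> cut_in E S = {}"
    by (auto simp: cut_out_def cut_in_def)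
  have less: "g a / f a < g b / f b" if "g a / f a \<le> g b / f b" "a \<in> cut_in E S \<union> cut_out E S"
    "b \<in> cut_in E S \<union> cut_out E S" "a \<noteq> b" for a b
    using that inj_onD[OF inj, of a b] sub by fastforce
  obtain a b where ab: "a \<in> cut_out E S" "b \<in> cut_in E S" "g b / f b \<le> g a / f a"
    using circulation_ratio_inversion[OF assms(1-4) ne] by blast
  obtain a' b' where ab': "a' \<in> cut_out E S" "b' \<in> cut_in E S" "g a' / f a' \<le> g b' / f b'"
    using circulation_ratio_inversion[OF assms(1-4), of "- S"] ne by auto
  show ?thesis
  proof (rule order_vector_of_alternating[OF strict_linear_order_on_inj_key[OF inj]])
    show "cut_out E S \<union> cut_in E S \<subseteq> E" "finite (cut_out E S \<union> cut_in E S)"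
      using sub assms(1) by (auto simp: finite_cut_out finite_cut_in)
    show "(b, a) \<in> {(a, b). a \<in> E \<and> b \<in> E \<and> g a / f a < g b / f b}"
      using less[OF ab(3)] ab(1,2) sub disj by blast
    show "(a', b') \<in> {(a, b). a \<in> E \<and> b \<in> E \<and> g a / f a < g b / f b}"
      using less[OF ab'(3)] ab'(1,2) sub disj by blast
  qed (use disj ab ab' in auto)
qed

theorem corollaryc:
  fixes V :: "'v set" and E :: "('v \<times> 'v) set"
  assumes "digraph_ok V E"
    and "totally_cyclic E"
    and "three_edge_connected V (underlying_edges E)"
  shows "\<exists>r. strict_linear_order_on E r \<and> r \<subseteq> E \<times> E
           \<and> strong_map (cut_circuits V E) (order_circuits r)"
proof -
  have "finite V" "E \<subseteq> V \<times> V"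
    using assms(1) by (auto simp: digraph_ok_def)
  then have "finite E"
    using finite_subset[of E "V \<times> V"] by auto
  have connected: "connected_on V (underlying_edges E)"
    using assms(3) by (auto simp: three_edge_connected_def)
  obtain f where f: "circulation E f" "\<forall>e\<in>E. f e > 0"
    using totally_cyclic_positive_circulation[OF \<open>finite E\<close> assms(2)] .
  obtain g where g: "circulation E g" "inj_on (\<lambda>e. g e / f e) E"
    using exists_generic_circulation[OF \<open>finite E\<close> \<open>E \<subseteq> V \<times> V\<close> assms(3) f(2)] .
  define r where "r = {(a, b). a \<in> E \<and> b \<in> E \<and> g a / f a < g b / f b}"
  have "cut_circuits V E \<subseteq> vectors_of (order_circuits r)"
  proof
    fix X assume "X \<in> cut_circuits V E"
    then obtain S where "S \<subseteq> V" "S \<noteq> {}" "S \<noteq> V" "X = (cut_out E S, cut_in E S)"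
      unfolding cut_circuits_def cut_out_def cut_in_def by blast
    then show "X \<in> vectors_of (order_circuits r)"
      unfolding r_def using cut_mem_vectors_of_ratio_order[OF \<open>finite E\<close> f g(1,2)]
        connected_on_cut_nonempty[OF connected] by blast
  qed
  moreover have "strict_linear_order_on E r"
    unfolding r_def using g(2) by (rule strict_linear_order_on_inj_key)
  ultimately show ?thesis
    unfolding strong_map_def r_def by blast
qed

end
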